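(* Consider transport, under an invertible area-preserving map $P$ of a two-dimensional surface $\Sigma$, between two regions $R_0$ and $R_1$ separated by a homoclinic or heteroclinic tangle, with lobes $L_{i,j}(n)$ as described in the context, and assume $L_{0,1}(0)\cap L_{1,0}(0)=\emptyset$. Let $i\in\{0,1\}$, $j=1-i$, and let integers $k_1<k_3$ be such that $L_{i,j}(k_1)\cap L_{i,j}(k_3)\neq\emptyset$. Then $$L_{i,j}(k_1)\cap L_{i,j}(k_3)=\bigcup_{k_2=k_1+1}^{k_3-1} L_{i,j}(k_1)\cap L_{j,i}(k_2)\cap L_{i,j}(k_3).$$
   Context: $\Sigma$ is a two-dimensional surface with an area measure $\mu$ and $P:\Sigma\to\Sigma$ an invertible $\mu$-preserving map. $R_0$ and $R_1$ are two regions of $\Sigma$ whose common boundary is formed by segments of stable and unstable manifolds of hyperbolic fixed points of $P$ joined at primary intersection points (a homoclinic or heteroclinic tangle). For $i\in\{0,1\}$, $j=1-i$, $L_{i,j}(n)$ ($n\in\mathbb{Z}$) denotes the lobe of points that leave $R_i$ for $R_j$ immediately after $n$ iterations of $P$: $L_{i,j}(1)\subset R_i$, $L_{i,j}(0)=P\,L_{i,j}(1)\subset R_j$, and $P^kL_{i,j}(n)=L_{i,j}(n-k)$ for all $k,n\in\mathbb{Z}$. Transport between the regions occurs only through these lobes (turnstile): a point $x$ with $P^{m-1}x\in R_i$ and $P^{m}x\in R_j$ lies in $L_{i,j}(m)$. *)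

theory Defs
  imports "HOL-Analysis.Analysis"
begin

definition iter :: "('a \<Rightarrow> 'a) \<Rightarrow> int \<Rightarrow> 'a \<Rightarrow> 'a" where
  "iter P k = (if 0 \<le> k then P ^^ nat k else (inv P) ^^ nat (- k))"

definition area_preserving_bij :: "'a measure \<Rightarrow> ('a \<Rightarrow> 'a) \<Rightarrow> bool" where
  "area_preserving_bij mu P \<longleftrightarrow>
     space mu = UNIV \<and> bij P \<and> P \<in> mu \<rightarrow>\<^sub>M mu \<and> inv P \<in> mu \<rightarrow>\<^sub>M mu \<and>
     (\<forall>A \<in> sets mu. emeasure mu (P -` A) = emeasure mu A)"

definition turnstile_lobes ::
  "('a \<Rightarrow> 'a) \<Rightarrow> (nat \<Rightarrow> 'a set) \<Rightarrow> (nat \<Rightarrow> nat \<Rightarrow> int \<Rightarrow> 'a set) \<Rightarrow> bool" where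
  "turnstile_lobes P R L \<longleftrightarrow>
     R 0 \<union> R 1 = UNIV \<and> R 0 \<inter> R 1 = {} \<and>
     (\<forall>i \<in> {0,1}. let j = 1 - i in
        L i j 1 \<subseteq> R i \<and> L i j 0 = P ` L i j 1 \<and> L i j 0 \<subseteq> R j \<and>
        (\<forall>k n. iter P k ` L i j n = L i j (n - k)) \<and>
        (\<forall>x m. iter P (m - 1) x \<in> R i \<and> iter P m x \<in> R j \<longrightarrow> x \<in> L i j m))"

end

theory Submission
  imports Defs
begin

text \<open>A point of L i j k1 \<inter> L i j k3 is in R j at time k1 and back
  in R i at time k3 - 1. Since the orbit moves in integer steps, there is a
  first time k2 in between at which it re-enters R i; by the turnstile property the
  point then lies in L j i k2.\<close>

lemma int_first_entry:
  fixes f :: "int \<Rightarrow> bool"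
  assumes "\<not> f a" "f b" "a < b"
  shows "\<exists>m. a < m \<and> m \<le> b \<and> f m \<and> \<not> f (m - 1)"
proof -
  have "a + 1 \<le> b" using \<open>a < b\<close> by simp
  then show ?thesis using \<open>f b\<close>
  proof (induction b rule: int_ge_induct)
    case base
    then show ?case using \<open>\<not> f a\<close> by (intro exI[of _ "a + 1"]) simp
  next
    case (step b)
    then show ?case by (cases "f b") force+
  qed
qed

context
  fixes P :: "'a \<Rightarrow> 'a" and R :: "nat \<Rightarrow> 'a set" and L :: "nat \<Rightarrow> nat \<Rightarrow> int \<Rightarrow> 'a set"
  assumes lobes: "turnstile_lobes P R L"
begin

lemma turnstile_lobesD:
  assumes "i \<in> {0, 1}"
  shows "R (1 - i) = - R i"
    and "L i (1 - i) 1 \<subseteq> R i" and "L i (1 - i) 0 \<subseteq> R (1 - i)"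
    and "iter P k ` L i (1 - i) n = L i (1 - i) (n - k)"
    and "iter P (m - 1) x \<in> R i \<Longrightarrow> iter P m x \<in> R (1 - i) \<Longrightarrow> x \<in> L i (1 - i) m"
proof -
  from lobes have "\<forall>i \<in> {0, 1}. L i (1 - i) 1 \<subseteq> R i \<and> L i (1 - i) 0 \<subseteq> R (1 - i) \<and>
      (\<forall>k n. iter P k ` L i (1 - i) n = L i (1 - i) (n - k)) \<and>
      (\<forall>x m. iter P (m - 1) x \<in> R i \<and> iter P m x \<in> R (1 - i) \<longrightarrow> x \<in> L i (1 - i) m)"
    unfolding turnstile_lobes_def Let_def by blast
  with assms show "L i (1 - i) 1 \<subseteq> R i" "L i (1 - i) 0 \<subseteq> R (1 - i)"
    "iter P k ` L i (1 - i) n = L i (1 - i) (n - k)"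
    "iter P (m - 1) x \<in> R i \<Longrightarrow> iter P m x \<in> R (1 - i) \<Longrightarrow> x \<in> L i (1 - i) m"
    by blast+
  show "R (1 - i) = - R i"
    using lobes assms unfolding turnstile_lobes_def by auto
qed

lemma turnstile_lobe_exit:
  assumes "i \<in> {0, 1}" and "x \<in> L i (1 - i) n"
  shows "iter P (n - 1) x \<in> R i" and "iter P n x \<in> R (1 - i)"
proof -
  have "iter P (n - 1) x \<in> L i (1 - i) (n - (n - 1))" "iter P n x \<in> L i (1 - i) (n - n)"
    using turnstile_lobesD(4)[OF assms(1), of _ n, symmetric] assms(2) by blast+
  then have "iter P (n - 1) x \<in> L i (1 - i) 1" "iter P n x \<in> L i (1 - i) 0"
    by simp_all
  then show "iter P (n - 1) x \<in> R i" "iter P n x \<in> R (1 - i)"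
    using turnstile_lobesD(2,3)[OF assms(1)] by blast+
qed

lemma turnstile_return_lobe:
  assumes i: "i \<in> {0, 1}" and "k1 < k3"
    and x: "x \<in> L i (1 - i) k1" "x \<in> L i (1 - i) k3"
  shows "\<exists>k2. k1 < k2 \<and> k2 < k3 \<and> x \<in> L (1 - i) i k2"
proof -
  have j: "1 - i \<in> {0, 1}" "1 - (1 - i) = i" using i by auto
  have outside: "iter P k1 x \<notin> R i"
    using turnstile_lobe_exit(2)[OF i x(1)] turnstile_lobesD(1)[OF i] by simp
  have inside: "iter P (k3 - 1) x \<in> R i"
    using turnstile_lobe_exit(1)[OF i x(2)] .
  with outside have "k1 \<noteq> k3 - 1" by auto
  with \<open>k1 < k3\<close> have "k1 < k3 - 1" by simp
  then obtain k2 where k2: "k1 < k2" "k2 \<le> k3 - 1"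
      "iter P k2 x \<in> R i" "iter P (k2 - 1) x \<notin> R i"
    using int_first_entry[of "\<lambda>m. iter P m x \<in> R i"] outside inside by blast
  have "x \<in> L (1 - i) i k2"
    using turnstile_lobesD(5)[OF j(1), of k2 x] k2(3,4) j(2) turnstile_lobesD(1)[OF i]
    by simp
  with k2 show ?thesis by auto
qed

end

theorem lemma3:
  fixes mu :: "'a measure" and P :: "'a \<Rightarrow> 'a"
    and R :: "nat \<Rightarrow> 'a set" and L :: "nat \<Rightarrow> nat \<Rightarrow> int \<Rightarrow> 'a set"
    and i j :: nat and k1 k3 :: int
  assumes "area_preserving_bij mu P"
    and "turnstile_lobes P R L"
    and "L 0 1 0 \<inter> L 1 0 0 = {}"
    and "i \<in> {0, 1}" and "j = 1 - i"
    and "k1 < k3"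
    and "L i j k1 \<inter> L i j k3 \<noteq> {}"
  shows "L i j k1 \<inter> L i j k3 =
           (\<Union>k2 \<in> {k1<..<k3}. L i j k1 \<inter> L j i k2 \<inter> L i j k3)"
proof
  show "L i j k1 \<inter> L i j k3 \<subseteq> (\<Union>k2 \<in> {k1<..<k3}. L i j k1 \<inter> L j i k2 \<inter> L i j k3)"
  proof
    fix x assume "x \<in> L i j k1 \<inter> L i j k3"
    with turnstile_return_lobe[OF assms(2,4,6)] assms(5)
    obtain k2 where "k1 < k2" "k2 < k3" "x \<in> L j i k2" by blast
    with \<open>x \<in> L i j k1 \<inter> L i j k3\<close>
    show "x \<in> (\<Union>k2 \<in> {k1<..<k3}. L i j k1 \<inter> L j i k2 \<inter> L i j k3)" by auto
  qed
qed blast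

end
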